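(* Let $k\ge1$ and let $w=a_1a_2\cdots a_k$ be an admissible $k$-word, and let $h=h(w)$. Then $h$ is the least non-negative integer $i$ with $T_k^{i}[w]\in\psi_k(V_1)$, and moreover $T_k^{h}[w]=\psi_k([a_{h+1}])$.
   Context: Let $\mathcal{A}$ be a finite alphabet of $r$ symbols and $T=(T_{x,y})$ an $r\times r$ matrix with entries in $\{0,1\}$ which is irreducible, i.e. the directed graph on $\mathcal{A}$ with an edge $x\to y$ iff $T_{y,x}=1$ is strongly connected. An admissible $k$-word is a string $a_1\cdots a_k$ of symbols with $T_{a_{i+1},a_i}=1$ for $1\le i\le k-1$. $V_k$ is the complex vector space with basis $\{[w]\}$ indexed by admissible $k$-words. $\psi_k:V_1\to V_k$ is linear with $\psi_k([a])$ the sum of $[w]$ over all admissible $k$-words beginning with $a$. $T_k:V_k\to V_k$ is linear with $T_k([a_1\cdots a_k])=\sum[a_2\cdots a_kx]$, summed over symbols $x$ with $a_2\cdots a_kx$ admissible. For an admissible $k$-word $u=u_1\cdots u_k$, $h(u)$ is the smallest non-negative integer $h$ such that $u$ is the only admissible $k$-word beginning with $u_1\cdots u_{h+1}$ (so $h(u)\le k-1$). *)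

theory Defs
  imports Main "HOL.Complex"
begin

(* Symbols are the elements of a finite type 'a (so r = CARD('a)).
   T is the r x r 0/1 matrix, T x y = entry T_{x,y}. *)

definition zero_one_matrix :: "('a \<Rightarrow> 'a \<Rightarrow> nat) \<Rightarrow> bool" where
  "zero_one_matrix T \<longleftrightarrow> (\<forall>x y. T x y = 0 \<or> T x y = 1)"

definition irreducible_mat :: "('a \<Rightarrow> 'a \<Rightarrow> nat) \<Rightarrow> bool" where
  "irreducible_mat T \<longleftrightarrow> (\<forall>x y. (\<lambda>a b. T b a = 1)\<^sup>*\<^sup>* x y)"

(* admissible k-word a_1 ... a_k (list index i corresponds to a_{i+1}) *)
definition admissible :: "('a \<Rightarrow> 'a \<Rightarrow> nat) \<Rightarrow> nat \<Rightarrow> 'a list \<Rightarrow> bool" where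
  "admissible T k w \<longleftrightarrow> length w = k \<and> (\<forall>i. i + 1 < k \<longrightarrow> T (w ! (i+1)) (w ! i) = 1)"

(* Elements of V_k are represented by their coordinate functions on words
   (supported on admissible k-words); basis vector [w]: *)
definition basis_vec :: "'a list \<Rightarrow> ('a list \<Rightarrow> complex)" where
  "basis_vec w = (\<lambda>u. if u = w then 1 else 0)"

(* psi_k([a]) = sum of [w] over admissible k-words beginning with a *)
definition psi :: "('a \<Rightarrow> 'a \<Rightarrow> nat) \<Rightarrow> nat \<Rightarrow> 'a \<Rightarrow> ('a list \<Rightarrow> complex)" where
  "psi T k a = (\<lambda>u. if admissible T k u \<and> u \<noteq> [] \<and> hd u = a then 1 else 0)"

(* psi_k(V_1): image of V_1 (spanned by all [a]) under the linear map psi_k *)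
definition psi_image :: "('a::finite \<Rightarrow> 'a \<Rightarrow> nat) \<Rightarrow> nat \<Rightarrow> ('a list \<Rightarrow> complex) set" where
  "psi_image T k = {v. \<exists>c :: 'a \<Rightarrow> complex. v = (\<lambda>u. \<Sum>a\<in>UNIV. c a * psi T k a u)}"

(* T_k([a_1...a_k]) = sum of [a_2...a_k x] over x with a_2...a_k x admissible,
   extended linearly: the coefficient of an admissible u in T_k v is the sum of
   v w over admissible w with tl w = butlast u. *)
definition Tk :: "('a \<Rightarrow> 'a \<Rightarrow> nat) \<Rightarrow> nat \<Rightarrow> ('a list \<Rightarrow> complex) \<Rightarrow> ('a list \<Rightarrow> complex)" where
  "Tk T k v = (\<lambda>u. if admissible T k u
                    then (\<Sum>w\<in>{w. admissible T k w \<and> tl w = butlast u}. v w) else 0)"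

definition hh :: "('a \<Rightarrow> 'a \<Rightarrow> nat) \<Rightarrow> nat \<Rightarrow> 'a list \<Rightarrow> nat" where
  "hh T k u = (LEAST h. \<forall>v. admissible T k v \<and> take (h+1) v = take (h+1) u \<longrightarrow> v = u)"

end

theory Submission
  imports Defs
begin

text \<open>For \<open>i < k\<close>, \<open>T\<^sub>k\<^sup>i[w]\<close> is the indicator of the cylinder of admissible \<open>k\<close>-words
  beginning with \<open>a\<^sub>i\<^sub>+\<^sub>1\<cdots>a\<^sub>k\<close>, because \<open>T\<^sub>k\<close> maps the cylinder of \<open>a p\<close> to the cylinder of \<open>p\<close>.
  Every vector of \<open>\<psi>\<^sub>k(V\<^sub>1)\<close> depends only on the first letter. If \<open>a\<^sub>1\<cdots>a\<^sub>i\<^sub>+\<^sub>1\<close>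
  determines \<open>w\<close>, splicing \<open>a\<^sub>1\<cdots>a\<^sub>i\<close> in front of any admissible word starting with
  \<open>a\<^sub>i\<^sub>+\<^sub>1\<close> shows that the cylinder is that of \<open>a\<^sub>i\<^sub>+\<^sub>1\<close> alone. If not, another admissible
  word agrees with \<open>w\<close> up to position \<open>i+1\<close>; its tail, extended to length \<open>k\<close> (irreducibility
  gives every symbol a successor), starts with \<open>a\<^sub>i\<^sub>+\<^sub>1\<close> but lies outside the cylinder.\<close>

abbreviation edge :: "('a \<Rightarrow> 'a \<Rightarrow> nat) \<Rightarrow> 'a \<Rightarrow> 'a \<Rightarrow> bool" where
  "edge T x y \<equiv> T y x = 1"

lemma admissible_iff_successively:
  "admissible T k w \<longleftrightarrow> length w = k \<and> successively (edge T) w"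
  unfolding admissible_def successively_conv_nth by auto

lemma successively_take: "successively P xs \<Longrightarrow> successively P (take n xs)"
  by (metis append_take_drop_id successively_append_iff)

lemma successively_drop: "successively P xs \<Longrightarrow> successively P (drop n xs)"
  by (metis append_take_drop_id successively_append_iff)

lemma successively_extend:
  assumes "\<And>x. \<exists>y. P x y" "xs \<noteq> []" "successively P xs"
  shows "\<exists>ys. length ys = n \<and> successively P (xs @ ys)"
proof (induction n)
  case 0
  then show ?case using assms(3) by auto
next
  case (Suc n)
  then obtain ys where ys: "length ys = n" "successively P (xs @ ys)" by blast
  obtain y where "P (last (xs @ ys)) y" using assms(1) by blast
  then have "successively P ((xs @ ys) @ [y])"
    using ys assms(2) by (subst successively_append_iff) auto
  then show ?case using ys by (intro exI[of _ "ys @ [y]"]) auto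
qed

lemma irreducible_out_edge:
  assumes "irreducible_mat T" "edge T a b"
  shows "\<exists>y. edge T x y"
proof -
  have "(edge T)\<^sup>*\<^sup>* x a" using assms(1) unfolding irreducible_mat_def by blast
  then show ?thesis
    by (cases rule: converse_rtranclpE) (use assms(2) in blast)+
qed

lemma admissible_extension:
  assumes "\<And>x. \<exists>y. edge T x y" "successively (edge T) p" "p \<noteq> []" "length p \<le> k"
  shows "\<exists>u. admissible T k u \<and> take (length p) u = p"
proof -
  obtain e where "length e = k - length p" "successively (edge T) (p @ e)"
    using successively_extend[OF assms(1,3,2)] by blast
  then show ?thesis
    using assms(4) by (intro exI[of _ "p @ e"]) (simp add: admissible_iff_successively)
qed

lemma admissible_splice:
  assumes "admissible T k w" "admissible T k u" "i < k" "hd u = w ! i"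
  shows "admissible T k (take i w @ take (k - i) u)"
proof -
  have len: "length w = k" "length u = k"
    using assms(1,2) by (simp_all add: admissible_def)
  have link: "edge T (last (take i w)) (hd (take (k - i) u))" if "i = Suc j" for j
  proof -
    have "last (take i w) = w ! j" using that assms(3) len by (simp add: take_Suc_conv_app_nth)
    moreover have "edge T (w ! j) (w ! i)"
      using assms(1,3) that unfolding admissible_def by (metis Suc_eq_plus1)
    ultimately show ?thesis using assms(3,4) by simp
  qed
  have "successively (edge T) (take i w @ take (k - i) u)"
    using assms(1,2) link
    by (cases i) (auto simp: admissible_iff_successively successively_append_iff
                             successively_take)
  then show ?thesis using len assms(3) by (simp add: admissible_iff_successively)
qed

definition cylinder :: "('a \<Rightarrow> 'a \<Rightarrow> nat) \<Rightarrow> nat \<Rightarrow> 'a list \<Rightarrow> ('a list \<Rightarrow> complex)" where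
  "cylinder T k p = (\<lambda>u. if admissible T k u \<and> take (length p) u = p then 1 else 0)"

lemma basis_vec_eq_cylinder: "admissible T k w \<Longrightarrow> basis_vec w = cylinder T k w"
  by (auto simp: basis_vec_def cylinder_def admissible_def)

lemma psi_eq_cylinder:
  assumes "k \<ge> 1"
  shows "psi T k a = cylinder T k [a]"
proof
  fix u
  show "psi T k a u = cylinder T k [a] u"
    using assms by (cases u) (auto simp: psi_def cylinder_def admissible_def)
qed

text \<open>The only preimage of \<open>u\<close> under the shift that can start with \<open>a # p\<close> is
  \<open>a # butlast u\<close>, and it is admissible exactly when \<open>u\<close> starts with \<open>p\<close>.\<close>

lemma Tk_cylinder_Cons:
  fixes T :: "'a::finite \<Rightarrow> 'a \<Rightarrow> nat"
  assumes "successively (edge T) (a # p)" "p \<noteq> []" "length p < k"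
  shows "Tk T k (cylinder T k (a # p)) = cylinder T k p"
proof
  fix u
  show "Tk T k (cylinder T k (a # p)) u = cylinder T k p u"
  proof (cases "admissible T k u")
    case False
    then show ?thesis by (simp add: Tk_def cylinder_def)
  next
    case True
    define A where "A = {v. admissible T k v \<and> tl v = butlast u}"
    have lu: "length u = k" using True by (simp add: admissible_def)
    have "A \<subseteq> {v. set v \<subseteq> UNIV \<and> length v = k}" by (auto simp: A_def admissible_def)
    then have fin: "finite A" by (rule finite_subset) (rule finite_lists_length_eq, simp)
    have take_u: "take (length p) (butlast u) = take (length p) u"
      using assms(3) lu by (simp add: take_butlast)
    have preimage: "admissible T k v \<and> take (length (a # p)) v = a # p \<longleftrightarrow>
        v = a # butlast u \<and> take (length p) u = p" if "v \<in> A" for v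
    proof -
      have "admissible T k v" "length v = k" "tl v = butlast u"
        using that by (auto simp: A_def admissible_def)
      moreover from this have "v = hd v # butlast u" using assms(3) by (cases v) auto
      ultimately show ?thesis using take_u by (metis list.inject length_Cons take_Suc_Cons)
    qed
    have in_A: "a # butlast u \<in> A" if "take (length p) u = p"
    proof -
      have "hd (butlast u) = hd p"
        using that assms(2,3) lu by (metis take_u hd_take length_greater_0_conv)
      then have "successively (edge T) (a # butlast u)"
        using True assms(1,2,3) lu
        by (auto simp: successively_Cons admissible_iff_successively butlast_conv_take
                       successively_take)
      then show ?thesis using lu assms(3) by (simp add: A_def admissible_iff_successively)
    qed
    have "Tk T k (cylinder T k (a # p)) u
        = (\<Sum>v\<in>A. if v = a # butlast u \<and> take (length p) u = p then 1 else 0)"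
      using True preimage by (simp add: Tk_def A_def[symmetric]) (simp add: cylinder_def)
    also have "\<dots> = cylinder T k p u"
      using True fin in_A by (simp add: cylinder_def sum.delta)
    finally show ?thesis .
  qed
qed

lemma Tk_power_basis_vec:
  fixes T :: "'a::finite \<Rightarrow> 'a \<Rightarrow> nat"
  assumes "admissible T k w" "i < k"
  shows "(Tk T k ^^ i) (basis_vec w) = cylinder T k (drop i w)"
  using assms(2)
proof (induction i)
  case 0
  then show ?case using assms(1) by (simp add: basis_vec_eq_cylinder)
next
  case (Suc i)
  have lw: "length w = k" using assms(1) by (simp add: admissible_def)
  have "drop i w = w ! i # drop (Suc i) w" using Suc.prems lw by (simp add: Cons_nth_drop_Suc)
  moreover have "successively (edge T) (drop i w)"
    using assms(1) by (simp add: admissible_iff_successively successively_drop)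
  ultimately have "Tk T k (cylinder T k (drop i w)) = cylinder T k (drop (Suc i) w)"
    using Suc.prems lw by (simp add: Tk_cylinder_Cons)
  then show ?case using Suc by simp
qed

lemma cylinder_drop_eq_psi:
  assumes "admissible T k w" "i < k"
    and determined: "\<forall>v. admissible T k v \<and> take (i + 1) v = take (i + 1) w \<longrightarrow> v = w"
  shows "cylinder T k (drop i w) = psi T k (w ! i)"
proof
  fix u
  have lw: "length w = k" using assms(1) by (simp add: admissible_def)
  have "take (k - i) u = drop i w \<longleftrightarrow> take 1 u = [w ! i]" if u: "admissible T k u"
  proof
    assume "take (k - i) u = drop i w"
    then have "take 1 u = take 1 (drop i w)"
      using assms(2) take_take[of 1 "k - i" u] by simp
    then show "take 1 u = [w ! i]"
      using assms(2) lw by (simp add: Cons_nth_drop_Suc[symmetric])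
  next
    assume hd_u: "take 1 u = [w ! i]"
    define v where "v = take i w @ take (k - i) u"
    have "length u = k" using u by (simp add: admissible_def)
    then have "hd u = w ! i" using hd_u by (cases u) auto
    then have "admissible T k v" unfolding v_def using admissible_splice assms(1,2) u by blast
    moreover have "take (i + 1) v = take (i + 1) w"
      using hd_u assms(2) lw by (simp add: v_def take_add take_Suc_conv_app_nth)
    ultimately have "v = w" using determined by blast
    then show "take (k - i) u = drop i w"
      using lw assms(2) by (metis v_def append_eq_conv_conj length_take min.absorb4)
  qed
  then show "cylinder T k (drop i w) u = psi T k (w ! i) u"
    using assms(2) lw by (auto simp: psi_eq_cylinder cylinder_def)
qed

lemma psi_lincomb_apply:
  fixes c :: "'a::finite \<Rightarrow> complex"
  shows "(\<Sum>a\<in>UNIV. c a * psi T k a u) = (if admissible T k u \<and> u \<noteq> [] then c (hd u) else 0)"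
proof -
  have "(\<Sum>a\<in>UNIV. c a * psi T k a u)
      = (\<Sum>a\<in>UNIV. if a = hd u then (if admissible T k u \<and> u \<noteq> [] then c a else 0) else 0)"
    by (rule sum.cong) (auto simp: psi_def)
  then show ?thesis by simp
qed

lemma psi_in_psi_image: "psi T k a \<in> psi_image T k"
  unfolding psi_image_def
  by (rule CollectI, rule exI[of _ "\<lambda>b. if b = a then 1 else 0"])
     (rule ext, subst psi_lincomb_apply, simp add: psi_def)

text \<open>A linear combination of the \<open>\<psi>\<^sub>k([a])\<close> is constant on all admissible words with
  the same first letter, so a cylinder in \<open>\<psi>\<^sub>k(V\<^sub>1)\<close> is determined by its first letter.\<close>

lemma cylinder_in_psi_image_imp_eq:
  fixes T :: "'a::finite \<Rightarrow> 'a \<Rightarrow> nat"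
  assumes "cylinder T k p \<in> psi_image T k" "\<And>x. \<exists>y. edge T x y"
    and "successively (edge T) p" "successively (edge T) q"
    and "p \<noteq> []" "length p \<le> k" "length q = length p" "hd q = hd p"
  shows "q = p"
proof -
  obtain c where c: "\<And>u. cylinder T k p u = (if admissible T k u \<and> u \<noteq> [] then c (hd u) else 0)"
    using assms(1) unfolding psi_image_def by (auto simp: psi_lincomb_apply)
  have q_ne: "q \<noteq> []" using assms(5,7) by auto
  obtain up where up: "admissible T k up" "take (length p) up = p"
    using admissible_extension[OF assms(2,3,5,6)] by blast
  obtain uq where uq: "admissible T k uq" "take (length q) uq = q"
    using admissible_extension[OF assms(2,4) q_ne] assms(6,7) by auto
  have "up \<noteq> []" "uq \<noteq> []" using up(2) uq(2) assms(5) q_ne by auto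
  moreover from this have "hd uq = hd up"
    using up(2) uq(2) assms(5,8) q_ne by (metis hd_take length_greater_0_conv)
  ultimately have "cylinder T k p uq = cylinder T k p up"
    using c[of up] c[of uq] up(1) uq(1) by simp
  also have "\<dots> = 1" using up by (simp add: cylinder_def)
  finally show ?thesis using uq assms(7) by (simp add: cylinder_def split: if_splits)
qed

lemma Tk_power_basis_vec_notin_psi_image:
  fixes T :: "'a::finite \<Rightarrow> 'a \<Rightarrow> nat"
  assumes "irreducible_mat T" "admissible T k w" "admissible T k v"
    and "take (i + 1) v = take (i + 1) w" "v \<noteq> w"
  shows "(Tk T k ^^ i) (basis_vec w) \<notin> psi_image T k"
proof
  assume image: "(Tk T k ^^ i) (basis_vec w) \<in> psi_image T k"
  have len: "length v = k" "length w = k" using assms(2,3) by (simp_all add: admissible_def)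
  have "i + 1 < k"
    using assms(4,5) len by (metis append_take_drop_id drop_eq_Nil not_less)
  then have "edge T (w ! 0) (w ! 1)" using assms(2) unfolding admissible_def by simp
  then have out_edge: "\<And>x. \<exists>y. edge T x y" using irreducible_out_edge[OF assms(1)] by auto
  have "v ! i = w ! i" using assms(4) by (metis less_add_one nth_take)
  then have "hd (drop i v) = hd (drop i w)" using \<open>i + 1 < k\<close> len by (simp add: hd_drop_conv_nth)
  moreover have "cylinder T k (drop i w) \<in> psi_image T k"
    using image Tk_power_basis_vec[OF assms(2)] \<open>i + 1 < k\<close> by simp
  ultimately have "drop i v = drop i w"
    using \<open>i + 1 < k\<close> len assms(2,3) out_edge
    by (intro cylinder_in_psi_image_imp_eq)
       (auto simp: admissible_iff_successively successively_drop)
  moreover have "take i v = take i w" using assms(4) by (metis le_add1 min.absorb1 take_take)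
  ultimately show False using assms(5) by (metis append_take_drop_id)
qed

theorem lemma1p5:
  fixes T :: "'a::finite \<Rightarrow> 'a \<Rightarrow> nat" and k :: nat and w :: "'a list"
  assumes "zero_one_matrix T" and "irreducible_mat T"
    and "k \<ge> 1" and "admissible T k w"
  shows "((Tk T k) ^^ hh T k w) (basis_vec w) \<in> psi_image T k
       \<and> (\<forall>i < hh T k w. ((Tk T k) ^^ i) (basis_vec w) \<notin> psi_image T k)
       \<and> ((Tk T k) ^^ hh T k w) (basis_vec w) = psi T k (w ! hh T k w)"
proof -
  define determined where
    "determined i \<longleftrightarrow> (\<forall>v. admissible T k v \<and> take (i + 1) v = take (i + 1) w \<longrightarrow> v = w)"
    for i
  have h_def: "hh T k w = (LEAST i. determined i)" unfolding hh_def determined_def ..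
  have "determined (k - 1)"
    using assms(3,4) by (auto simp: determined_def admissible_def)
  then have det_h: "determined (hh T k w)" and "hh T k w \<le> k - 1"
    unfolding h_def by (rule LeastI, rule Least_le)
  then have h_less: "hh T k w < k" using assms(3) by simp
  have at_h: "(Tk T k ^^ hh T k w) (basis_vec w) = psi T k (w ! hh T k w)"
    using Tk_power_basis_vec[OF assms(4) h_less] cylinder_drop_eq_psi[OF assms(4) h_less] det_h
    unfolding determined_def by simp
  have "(Tk T k ^^ i) (basis_vec w) \<notin> psi_image T k" if i_less: "i < hh T k w" for i
  proof -
    obtain v where "admissible T k v" "take (i + 1) v = take (i + 1) w" "v \<noteq> w"
      using not_less_Least[OF i_less[unfolded h_def]] unfolding determined_def by blast
    then show ?thesis using Tk_power_basis_vec_notin_psi_image assms(2,4) by blast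
  qed
  then show ?thesis using at_h psi_in_psi_image by auto
qed

end
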